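(* In the setting of problem (P) under the standing assumptions, run Algorithm LCPG with $\lim_k\eta^k=\eta$, and suppose every feasible point of (P) satisfies MFCQ, so that there is a constant $B>0$ with $\|\lambda^{k+1}\|\le B$ for all $k$. Let $D:=\sqrt{(\psi_0(x^0)-\psi_0^* )/L_0}$ and let $\alpha_0,\dots,\alpha_K>0$ be nondecreasing. Then $$\sum_{k=0}^K\alpha_k\|\partial_x\mathcal{L}(x^{k+1},\lambda^{k+1})\|_-^2\le8(L_0+B\|L\|)^2D^2\alpha_K,$$ $$\sum_{k=0}^K\alpha_k\langle\lambda^{k+1},|\psi(x^{k+1})-\eta|\rangle\le2B\|L\|D^2\alpha_K+B\sum_{k=0}^K\alpha_k\|\eta-\eta^k\|,$$ where $|\cdot|$ is taken componentwise. Consequently, if $\hat k\in\{0,\dots,K\}$ is drawn with $\Pr(\hat k=k)=\alpha_k/\sum_{j=0}^K\alpha_j$, then $x^{\hat k+1}$ is a randomized $\epsilon_K$ type-I KKT point of (P) (with multiplier $\lambda^{\hat k+1}$) for $$\epsilon_K=\frac{1}{\sum_{k=0}^K\alpha_k}\max\Big\{8(L_0+B\|L\|)^2D^2\alpha_K,\ 2B\|L\|D^2\alpha_K+B\sum_{k=0}^K\alpha_k\|\eta-\eta^k\|\Big\}.$$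
   Context: Problem (P): minimize $\psi_0(x):=f_0(x)+\chi_0(x)$ over $x\in\mathbb{R}^d$ subject to $\psi_i(x):=f_i(x)+\chi_i(x)\le\eta_i$, $i\in[m]:=\{1,\dots,m\}$. Standing assumptions: $\chi_0$ is proper, convex, lower semicontinuous; each $\chi_i$ ($i\in[m]$) is convex and continuous on $\mathrm{dom}\,\chi_0$; each $f_i$ ($i=0,\dots,m$) is differentiable with $L_i$-Lipschitz gradient on $\mathrm{dom}\,\chi_0$; $L:=(L_1,\dots,L_m)^\top$; the optimal value $\psi_0^*$ of (P) is finite; the feasible set $\mathcal{X}:=\{x\in\mathrm{dom}\,\chi_0:\psi_i(x)\le\eta_i,\ i\in[m]\}$ is nonempty and compact. Write $\psi=(\psi_1,\dots,\psi_m)^\top$, $\eta=(\eta_1,\dots,\eta_m)^\top$; vector inequalities are componentwise. Subdifferential: $\partial\psi_i(x):=\nabla f_i(x)+\partial\chi_i(x)$ (convex subdifferential of $\chi_i$, Minkowski sum). Lagrangian $\mathcal{L}(x,\lambda)=\psi_0(x)+\sum_{i=1}^m\lambda_i(\psi_i(x)-\eta_i)$ and $\partial_x\mathcal{L}(x,\lambda):=\partial\psi_0(x)+\sum_i\lambda_i\partial\psi_i(x)$. For a set $S$, $\|S\|_-:=\inf\{\|s\|:s\in S\}$. Algorithm LCPG: given $x^0\in\mathrm{dom}\,\chi_0$ and $\eta^0\in\mathbb{R}^m$ with $\psi(x^0)<\eta^0<\eta$. For $k=0,1,\dots$: define for $i=0,\dots,m$ the function $\psi_i^k(x):=f_i(x^k)+\langle\nabla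 f_i(x^k),x-x^k\rangle+\frac{L_i}{2}\|x-x^k\|^2+\chi_i(x)$; let $x^{k+1}$ be the minimizer of $\psi_0^k(x)$ subject to $\psi_i^k(x)\le\eta_i^k$, $i\in[m]$ (the $k$-th subproblem); set $\eta^{k+1}=\eta^k+\delta^k$ with $\delta^k\in\mathbb{R}^m$, $\delta^k>0$, chosen so that $\eta^{k+1}<\eta$. A vector $\lambda^{k+1}\in\mathbb{R}^m_+$ is a Lagrange multiplier of the $k$-th subproblem if $0\in\partial\psi_0^k(x^{k+1})+\sum_i\lambda_i^{k+1}\partial\psi_i^k(x^{k+1})$ and $\lambda_i^{k+1}(\psi_i^k(x^{k+1})-\eta_i^k)=0$ for all $i\in[m]$, where $\partial\psi_i^k(x)=\nabla f_i(x^k)+L_i(x-x^k)+\partial\chi_i(x)$. MFCQ: a point $x$ satisfies MFCQ if there is $z\in\mathbb{R}^d$ with $\langle z,v\rangle\le0$ for all $v$ in the normal cone $N_{\mathrm{dom}\,\chi_0}(x)$ and $\max_{v\in\partial\psi_i(x)}\langle v,z\rangle<0$ for every $i\in\mathcal{A}(x):=\{i\in[m]:\psi_i(x)=\eta_i\}$. Type-I KKT: $x$ is an $\epsilon$ type-I KKT point of (P) if $\psi(x)\le\eta$ and there is $\lambda\in\mathbb{R}^m_+$ with $\|\partial_x\mathcal{L}(x,\lambda)\|_-^2\le\epsilon$ and $-\sum_i\lambda_i(\psi_i(x)-\eta_i)\le\epsilon$. It is a randomized $\epsilon$ type-I KKT point if $x,\lambda$ are random, feasible, and these two inequalities hold in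 expectation. *)

theory Defs
  imports "HOL-Analysis.Analysis" "HOL-Probability.Probability"
begin

text \<open>Convex subdifferential of h at x, relative to the domain C = dom chi_0
  (i.e. the subdifferential of h restricted to C, extended by +infinity outside C).\<close>
definition csubdiff :: "'a::real_inner set \<Rightarrow> ('a \<Rightarrow> real) \<Rightarrow> 'a \<Rightarrow> 'a set" where
  "csubdiff C h x = {v. \<forall>y\<in>C. h x + inner v (y - x) \<le> h y}"

definition ncone :: "'a::real_inner set \<Rightarrow> 'a \<Rightarrow> 'a set" where
  "ncone C x = {v. \<forall>y\<in>C. inner v (y - x) \<le> 0}"

definition setnorm :: "'a::real_normed_vector set \<Rightarrow> real" where
  "setnorm S = Inf (norm ` S)"

text \<open>Euclidean norm of a vector in R^m, represented by its components 1..m.\<close>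
definition vnorm :: "nat \<Rightarrow> (nat \<Rightarrow> real) \<Rightarrow> real" where
  "vnorm m v = sqrt (\<Sum>i=1..m. (v i)^2)"

text \<open>With G i = grad f_i this is the partial x-subdifferential of the Lagrangian;
  with G i y = grad f_i(x^k) + L_i (y - x^k) it is that of the k-th subproblem.\<close>
definition lagr_subdiff ::
  "'a::real_inner set \<Rightarrow> nat \<Rightarrow> (nat \<Rightarrow> 'a \<Rightarrow> 'a) \<Rightarrow> (nat \<Rightarrow> 'a \<Rightarrow> real)
    \<Rightarrow> (nat \<Rightarrow> real) \<Rightarrow> 'a \<Rightarrow> 'a set" where
  "lagr_subdiff C m G chi lam x =
     {G 0 x + g 0 + (\<Sum>i=1..m. lam i *\<^sub>R (G i x + g i)) | g.
        \<forall>i\<in>{0..m}. g i \<in> csubdiff C (chi i) x}"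

definition psi :: "(nat \<Rightarrow> 'a \<Rightarrow> real) \<Rightarrow> (nat \<Rightarrow> 'a \<Rightarrow> real) \<Rightarrow> nat \<Rightarrow> 'a \<Rightarrow> real" where
  "psi f chi i x = f i x + chi i x"

definition psik :: "(nat \<Rightarrow> 'a \<Rightarrow> real) \<Rightarrow> (nat \<Rightarrow> 'a \<Rightarrow> 'a) \<Rightarrow> (nat \<Rightarrow> real)
    \<Rightarrow> (nat \<Rightarrow> 'a \<Rightarrow> real) \<Rightarrow> 'a::real_inner \<Rightarrow> nat \<Rightarrow> 'a \<Rightarrow> real" where
  "psik f grad L chi xk i x =
     f i xk + inner (grad i xk) (x - xk) + L i / 2 * (norm (x - xk))^2 + chi i x"

definition feas :: "'a set \<Rightarrow> nat \<Rightarrow> (nat \<Rightarrow> 'a \<Rightarrow> real) \<Rightarrow> (nat \<Rightarrow> 'a \<Rightarrow> real)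
    \<Rightarrow> (nat \<Rightarrow> real) \<Rightarrow> 'a set" where
  "feas C m f chi eta = {x\<in>C. \<forall>i\<in>{1..m}. psi f chi i x \<le> eta i}"

text \<open>MFCQ at x.  "max over v in dpsi_i(x) of <v,z> < 0" is written as: the values
  <v,z> are bounded above by some negative constant.\<close>
definition MFCQ :: "'a::real_inner set \<Rightarrow> nat \<Rightarrow> (nat \<Rightarrow> 'a \<Rightarrow> real) \<Rightarrow> (nat \<Rightarrow> 'a \<Rightarrow> 'a)
    \<Rightarrow> (nat \<Rightarrow> 'a \<Rightarrow> real) \<Rightarrow> (nat \<Rightarrow> real) \<Rightarrow> 'a \<Rightarrow> bool" where
  "MFCQ C m f grad chi eta x \<longleftrightarrow>
     (\<exists>z. (\<forall>v\<in>ncone C x. inner z v \<le> 0) \<and>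
          (\<forall>i\<in>{1..m}. psi f chi i x = eta i \<longrightarrow>
             (\<exists>c<0. \<forall>v\<in>{grad i x + g | g. g \<in> csubdiff C (chi i) x}. inner v z \<le> c)))"

text \<open>Randomized epsilon type-I KKT point: p is the joint distribution of (x, lambda).\<close>
definition rand_typeI_KKT :: "'a::real_inner set \<Rightarrow> nat \<Rightarrow> (nat \<Rightarrow> 'a \<Rightarrow> real) \<Rightarrow> (nat \<Rightarrow> 'a \<Rightarrow> 'a)
    \<Rightarrow> (nat \<Rightarrow> 'a \<Rightarrow> real) \<Rightarrow> (nat \<Rightarrow> real) \<Rightarrow> ('a \<times> (nat \<Rightarrow> real)) pmf \<Rightarrow> real \<Rightarrow> bool" where
  "rand_typeI_KKT C m f grad chi eta p eps \<longleftrightarrow>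
     (\<forall>(y, l)\<in>set_pmf p. y \<in> feas C m f chi eta \<and> (\<forall>i\<in>{1..m}. 0 \<le> l i)) \<and>
     measure_pmf.expectation p (\<lambda>(y, l). (setnorm (lagr_subdiff C m grad chi l y))^2) \<le> eps \<and>
     measure_pmf.expectation p (\<lambda>(y, l). - (\<Sum>i=1..m. l i * (psi f chi i y - eta i))) \<le> eps"

end

theory Submission
  imports Defs
begin

(* The k-th subproblem is strongly convex with modulus L_0 and x^k is feasible for it, so its
   KKT conditions give the sufficient decrease
     psi_0(x^{k+1}) + L_0/2 ||x^{k+1} - x^k||^2 <= psi_0(x^k),
   and telescoping bounds the alpha-weighted sum of squared steps by 2 alpha_K D^2.  The KKT
   conditions of the subproblem differ from those of (P) only through the proximal-linear models
   of the f_i, whose gradients and values are within 2 L_i ||x^{k+1} - x^k|| and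
   L_i ||x^{k+1} - x^k||^2 of the true ones.  With ||lambda^{k+1}|| <= B this bounds the
   stationarity residual by 2 (L_0 + B ||L||) ||x^{k+1} - x^k|| and the complementarity residual by
   B ||eta - eta^k|| + B ||L|| ||x^{k+1} - x^k||^2; drawing k with probability proportional to
   alpha_k turns the weighted sums into expectations.
   Only the subproblem KKT conditions and the bound B are used: MFCQ, compactness of the feasible
   set and the minimality of x^{k+1} serve in the paper only to make B and lambda^{k+1} exist. *)

lemma vnorm_nonneg: "0 \<le> vnorm m v"
  unfolding vnorm_def by (simp add: sum_nonneg)

lemma sum_mult_le_vnorm_bound:
  assumes "vnorm m a \<le> B"
  shows "(\<Sum>i=1..m. a i * b i) \<le> B * vnorm m b"
proof -
  have "(\<Sum>i=1..m. a i * b i) \<le> (\<Sum>i=1..m. \<bar>a i\<bar> * \<bar>b i\<bar>)"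
    by (intro sum_mono) (metis abs_ge_self abs_mult)
  also have "\<dots> \<le> vnorm m a * vnorm m b"
    unfolding vnorm_def using L2_set_mult_ineq[of a b "{1..m}"] by (simp add: L2_set_def)
  also have "\<dots> \<le> B * vnorm m b"
    using assms by (intro mult_right_mono vnorm_nonneg)
  finally show ?thesis .
qed

section \<open>Functions with Lipschitz gradient\<close>

lemma lipschitz_gradient_upper_bound:
  fixes f :: "'a::real_inner \<Rightarrow> real"
  assumes "convex C" "x \<in> C" "y \<in> C"
    and grad: "\<And>z. z \<in> C \<Longrightarrow> GDERIV f z :> g z"
    and lip: "\<And>u w. u \<in> C \<Longrightarrow> w \<in> C \<Longrightarrow> norm (g u - g w) \<le> L * norm (u - w)"
  shows "f y \<le> f x + inner (g x) (y - x) + L / 2 * (norm (y - x))\<^sup>2"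
proof -
  define v where "v = y - x"
  define \<phi> where "\<phi> t = f (x + t *\<^sub>R v) - t * inner (g x) v - L / 2 * t\<^sup>2 * (norm v)\<^sup>2" for t
  define \<phi>' where "\<phi>' t = inner v (g (x + t *\<^sub>R v) - g x) - L * t * (norm v)\<^sup>2" for t
  have segment: "x + t *\<^sub>R v \<in> C" if "0 \<le> t" "t \<le> 1" for t
  proof -
    have "x + t *\<^sub>R v = (1 - t) *\<^sub>R x + t *\<^sub>R y" by (simp add: v_def algebra_simps)
    with assms(1-3) that show ?thesis by (simp add: convexD_alt)
  qed
  have deriv: "(\<phi> has_real_derivative \<phi>' t) (at t)" if "0 \<le> t" "t \<le> 1" for t
  proof -
    have "(f has_derivative (\<lambda>h. inner h (g (x + t *\<^sub>R v)))) (at (x + t *\<^sub>R v))"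
      using grad[OF segment[OF that]] unfolding gderiv_def .
    moreover have "((\<lambda>t. x + t *\<^sub>R v) has_derivative (\<lambda>h. h *\<^sub>R v)) (at t)"
      by (auto intro!: derivative_eq_intros)
    ultimately have "((\<lambda>t. f (x + t *\<^sub>R v)) has_derivative
        (\<lambda>h. inner (h *\<^sub>R v) (g (x + t *\<^sub>R v)))) (at t)"
      using has_derivative_compose by blast
    then have "((\<lambda>t. f (x + t *\<^sub>R v)) has_real_derivative inner v (g (x + t *\<^sub>R v))) (at t)"
      by (simp add: has_field_derivative_def mult_commute_abs)
    then show ?thesis unfolding \<phi>_def \<phi>'_def
      by (auto intro!: derivative_eq_intros
          simp: algebra_simps inner_diff_right inner_commute power2_eq_square)
  qed
  obtain t where t: "0 < t" "t < 1" "\<phi> 1 - \<phi> 0 = \<phi>' t"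
    using MVT2[of 0 1 \<phi> \<phi>'] deriv by auto
  have "inner v (g (x + t *\<^sub>R v) - g x) \<le> norm v * norm (g (x + t *\<^sub>R v) - g x)"
    by (rule norm_cauchy_schwarz)
  also have "\<dots> \<le> norm v * (L * norm (t *\<^sub>R v))"
    using lip[OF segment assms(2), of t] t by (intro mult_left_mono) auto
  also have "\<dots> = L * t * (norm v)\<^sup>2"
    using t by (simp add: power2_eq_square)
  finally have "\<phi> 1 \<le> \<phi> 0" using t unfolding \<phi>'_def by simp
  then show ?thesis unfolding \<phi>_def v_def by (simp add: algebra_simps)
qed

lemma lipschitz_gradient_abs_bound:
  fixes f :: "'a::real_inner \<Rightarrow> real"
  assumes "convex C" "x \<in> C" "y \<in> C"
    and grad: "\<And>z. z \<in> C \<Longrightarrow> GDERIV f z :> g z"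
    and lip: "\<And>u w. u \<in> C \<Longrightarrow> w \<in> C \<Longrightarrow> norm (g u - g w) \<le> L * norm (u - w)"
  shows "\<bar>f y - f x - inner (g x) (y - x)\<bar> \<le> L / 2 * (norm (y - x))\<^sup>2"
proof -
  have "GDERIV (\<lambda>z. - f z) z :> - g z" if "z \<in> C" for z
    using has_derivative_minus[OF grad[OF that, unfolded gderiv_def]]
    unfolding gderiv_def by simp
  moreover have "norm (- g u - - g w) \<le> L * norm (u - w)" if "u \<in> C" "w \<in> C" for u w
    using lip[OF that] by (simp add: norm_minus_commute)
  ultimately have "- f y \<le> - f x + inner (- g x) (y - x) + L / 2 * (norm (y - x))\<^sup>2"
    by (rule lipschitz_gradient_upper_bound[OF assms(1-3)])
  moreover have "f y \<le> f x + inner (g x) (y - x) + L / 2 * (norm (y - x))\<^sup>2"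
    using assms by (rule lipschitz_gradient_upper_bound)
  ultimately show ?thesis unfolding abs_le_iff inner_minus_left by linarith
qed

section \<open>The proximal-linear model\<close>

abbreviation psik_grad ::
    "(nat \<Rightarrow> 'a \<Rightarrow> 'a) \<Rightarrow> (nat \<Rightarrow> real) \<Rightarrow> 'a \<Rightarrow> nat \<Rightarrow> 'a \<Rightarrow> 'a::real_vector"
  where "psik_grad grad L xk \<equiv> \<lambda>i z. grad i xk + L i *\<^sub>R (z - xk)"

lemma psik_center [simp]: "psik f grad L chi xk i xk = psi f chi i xk"
  unfolding psik_def psi_def by simp

context
  fixes C :: "'a::real_inner set" and f chi :: "nat \<Rightarrow> 'a \<Rightarrow> real" and grad and L and i
  assumes convex: "convex C"
    and grad: "\<And>z. z \<in> C \<Longrightarrow> GDERIV (f i) z :> grad i z"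
    and lip: "\<And>u w. u \<in> C \<Longrightarrow> w \<in> C \<Longrightarrow> norm (grad i u - grad i w) \<le> L i * norm (u - w)"
begin

lemma psi_le_psik:
  assumes "xk \<in> C" "y \<in> C"
  shows "psi f chi i y \<le> psik f grad L chi xk i y"
  using lipschitz_gradient_abs_bound[OF convex assms grad lip]
  unfolding psi_def psik_def abs_le_iff by (simp add: field_simps)

lemma psik_le_psi_add:
  assumes "xk \<in> C" "y \<in> C"
  shows "psik f grad L chi xk i y \<le> psi f chi i y + L i * (norm (y - xk))\<^sup>2"
  using lipschitz_gradient_abs_bound[OF convex assms grad lip]
  unfolding psi_def psik_def abs_le_iff by (simp add: field_simps)

end

lemma psik_subgradient_ineq:
  fixes xk x' y :: "'a::real_inner"
  assumes "g \<in> csubdiff C (chi i) x'" "y \<in> C"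
  shows "psik f grad L chi xk i x' + inner (psik_grad grad L xk i x' + g) (y - x')
           + L i / 2 * (norm (y - x'))\<^sup>2 \<le> psik f grad L chi xk i y"
proof -
  have chi: "chi i x' + inner g (y - x') \<le> chi i y"
    using assms unfolding csubdiff_def by auto
  have "inner (x' - xk) (y - x') = ((norm (y - xk))\<^sup>2 - (norm (x' - xk))\<^sup>2 - (norm (y - x'))\<^sup>2) / 2"
    using dot_norm[of "x' - xk" "y - x'"] by simp
  then have quad: "L i / 2 * (norm (x' - xk))\<^sup>2 + L i * inner (x' - xk) (y - x')
      + L i / 2 * (norm (y - x'))\<^sup>2 = L i / 2 * (norm (y - xk))\<^sup>2"
    by (simp only:) (simp add: field_simps)
  have lin: "inner (grad i xk) (x' - xk) + inner (grad i xk) (y - x') = inner (grad i xk) (y - xk)"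
    by (simp add: inner_diff_right)
  show ?thesis
    using chi quad lin unfolding psik_def inner_add_left inner_scaleR_left by linarith
qed

lemma setnorm_le_norm:
  assumes "v \<in> S"
  shows "setnorm S \<le> norm v"
  unfolding setnorm_def using assms by (intro cInf_lower) (auto intro: bdd_belowI[of _ 0])

lemma setnorm_nonneg:
  assumes "S \<noteq> {}"
  shows "0 \<le> setnorm S"
  unfolding setnorm_def using assms by (intro cInf_greatest) auto

lemma lagr_subdiff_change_smooth_part:
  assumes "v \<in> lagr_subdiff C m G chi lam x"
  shows "v + (G' 0 x - G 0 x) + (\<Sum>i=1..m. lam i *\<^sub>R (G' i x - G i x))
           \<in> lagr_subdiff C m G' chi lam x"
proof -
  obtain g where g: "\<forall>i\<in>{0..m}. g i \<in> csubdiff C (chi i) x"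
    and v: "v = G 0 x + g 0 + (\<Sum>i=1..m. lam i *\<^sub>R (G i x + g i))"
    using assms unfolding lagr_subdiff_def by blast
  have "v + (G' 0 x - G 0 x) + (\<Sum>i=1..m. lam i *\<^sub>R (G' i x - G i x))
          = G' 0 x + g 0 + (\<Sum>i=1..m. lam i *\<^sub>R (G' i x + g i))"
    unfolding v by (simp add: algebra_simps flip: sum.distrib)
  with g show ?thesis unfolding lagr_subdiff_def by blast
qed

lemma subproblem_kkt_descent:
  fixes xk x' y :: "'a::real_inner"
  assumes stat: "0 \<in> lagr_subdiff C m (psik_grad grad L xk) chi lam x'"
    and lam_nonneg: "\<forall>i\<in>{1..m}. 0 \<le> lam i"
    and compl: "\<forall>i\<in>{1..m}. lam i * (psik f grad L chi xk i x' - e i) = 0"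
    and "y \<in> C" and y_feas: "\<forall>i\<in>{1..m}. psik f grad L chi xk i y \<le> e i"
    and curv: "\<forall>i\<in>{1..m}. 0 \<le> L i * norm (y - x')"
      \<comment> \<open>not \<open>0 \<le> L i\<close>: Lipschitz continuity on a singleton C allows negative L i\<close>
  shows "psik f grad L chi xk 0 x' + L 0 / 2 * (norm (y - x'))\<^sup>2 \<le> psik f grad L chi xk 0 y"
proof -
  obtain g where g: "\<forall>i\<in>{0..m}. g i \<in> csubdiff C (chi i) x'"
    and zero: "0 = psik_grad grad L xk 0 x' + g 0
                   + (\<Sum>i=1..m. lam i *\<^sub>R (psik_grad grad L xk i x' + g i))"
    using stat unfolding lagr_subdiff_def by blast
  define G where "G i = psik_grad grad L xk i x' + g i" for i
  have model: "psik f grad L chi xk i x' + inner (G i) (y - x') + L i / 2 * (norm (y - x'))\<^sup>2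
      \<le> psik f grad L chi xk i y" if "i \<in> {0..m}" for i
    unfolding G_def using psik_subgradient_ineq g that \<open>y \<in> C\<close> by blast
  have "lam i * inner (G i) (y - x') \<le> 0" if i: "i \<in> {1..m}" for i
  proof -
    have "0 \<le> L i * norm (y - x') * norm (y - x') / 2"
      using curv i by simp
    then have "0 \<le> L i / 2 * (norm (y - x'))\<^sup>2"
      by (simp add: power2_eq_square)
    with model[of i] i have "inner (G i) (y - x') \<le> e i - psik f grad L chi xk i x'"
      using y_feas by fastforce
    then have "lam i * inner (G i) (y - x') \<le> lam i * (e i - psik f grad L chi xk i x')"
      using lam_nonneg i by (intro mult_left_mono) auto
    also have "\<dots> = 0"
      using compl i by auto
    finally show ?thesis .
  qed
  then have "(\<Sum>i=1..m. lam i * inner (G i) (y - x')) \<le> 0"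
    by (intro sum_nonpos) auto
  moreover have "inner (G 0) (y - x') + (\<Sum>i=1..m. lam i * inner (G i) (y - x')) = 0"
  proof -
    have "inner (G 0 + (\<Sum>i=1..m. lam i *\<^sub>R G i)) (y - x') = 0"
      using zero unfolding G_def by (metis inner_zero_left add.assoc)
    then show ?thesis by (simp add: inner_add_left inner_sum_left)
  qed
  ultimately have "0 \<le> inner (G 0) (y - x')" by linarith
  with model[of 0] show ?thesis by simp
qed

lemma setnorm_lagr_subdiff_le:
  fixes xk x' :: "'a::real_inner"
  assumes stat: "0 \<in> lagr_subdiff C m (psik_grad grad L xk) chi lam x'"
    and lip: "\<forall>i\<in>{0..m}. norm (grad i x' - grad i xk) \<le> L i * norm (x' - xk)"
    and lam_nonneg: "\<forall>i\<in>{1..m}. 0 \<le> lam i"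
    and lam_bound: "vnorm m lam \<le> B"
  shows "(setnorm (lagr_subdiff C m grad chi lam x'))\<^sup>2
           \<le> (2 * (L 0 + B * vnorm m L) * norm (x' - xk))\<^sup>2"
proof -
  define d where "d i = grad i x' - psik_grad grad L xk i x'" for i
  have d_le: "norm (d i) \<le> 2 * L i * norm (x' - xk)" if "i \<in> {0..m}" for i
  proof -
    have lip_i: "norm (grad i x' - grad i xk) \<le> L i * norm (x' - xk)"
      using lip that by blast
    then have "0 \<le> L i * norm (x' - xk)"
      using norm_ge_zero order_trans by blast
    then have "norm (L i *\<^sub>R (x' - xk)) = L i * norm (x' - xk)"
      by (metis abs_of_nonneg abs_mult abs_norm_cancel norm_scaleR)
    moreover have "norm (d i) \<le> norm (grad i x' - grad i xk) + norm (L i *\<^sub>R (x' - xk))"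
    proof -
      have "d i = (grad i x' - grad i xk) - L i *\<^sub>R (x' - xk)"
        unfolding d_def by (simp add: algebra_simps)
      then show ?thesis by (metis norm_triangle_ineq4)
    qed
    ultimately show ?thesis using lip_i by linarith
  qed
  have sum_le: "norm (\<Sum>i=1..m. lam i *\<^sub>R d i) \<le> (\<Sum>i=1..m. lam i * norm (d i))"
  proof -
    have "norm (\<Sum>i=1..m. lam i *\<^sub>R d i) \<le> (\<Sum>i=1..m. norm (lam i *\<^sub>R d i))"
      by (rule norm_sum)
    also have "\<dots> = (\<Sum>i=1..m. lam i * norm (d i))"
      using lam_nonneg by (intro sum.cong) auto
    finally show ?thesis .
  qed
  have elem: "d 0 + (\<Sum>i=1..m. lam i *\<^sub>R d i) \<in> lagr_subdiff C m grad chi lam x'"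
    using lagr_subdiff_change_smooth_part[OF stat, of grad] unfolding d_def by simp
  then have "setnorm (lagr_subdiff C m grad chi lam x')
      \<le> norm (d 0 + (\<Sum>i=1..m. lam i *\<^sub>R d i))"
    by (rule setnorm_le_norm)
  also have "\<dots> \<le> norm (d 0) + (\<Sum>i=1..m. lam i * norm (d i))"
    using sum_le by (meson add_left_mono norm_triangle_ineq order_trans)
  also have "\<dots> \<le> 2 * L 0 * norm (x' - xk) + (\<Sum>i=1..m. lam i * (2 * L i * norm (x' - xk)))"
    using d_le lam_nonneg by (intro add_mono sum_mono mult_left_mono) auto
  also have "\<dots> = 2 * norm (x' - xk) * (L 0 + (\<Sum>i=1..m. lam i * L i))"
    by (simp add: sum_distrib_left algebra_simps)
  also have "\<dots> \<le> 2 * norm (x' - xk) * (L 0 + B * vnorm m L)"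
    using sum_mult_le_vnorm_bound[OF lam_bound] by (intro mult_left_mono add_left_mono) auto
  finally have "setnorm (lagr_subdiff C m grad chi lam x')
      \<le> 2 * (L 0 + B * vnorm m L) * norm (x' - xk)"
    by (simp add: algebra_simps)
  moreover have "0 \<le> setnorm (lagr_subdiff C m grad chi lam x')"
    using elem by (intro setnorm_nonneg) blast
  ultimately show ?thesis
    by (simp add: power_mono)
qed

lemma complementarity_residual_le:
  fixes P Q e eta lam L :: "nat \<Rightarrow> real"
  assumes lam_nonneg: "\<forall>i\<in>{1..m}. 0 \<le> lam i"
    and compl: "\<forall>i\<in>{1..m}. lam i * (Q i - e i) = 0"
    and gap: "\<forall>i\<in>{1..m}. Q i - P i \<le> L i * r"
    and feas: "\<forall>i\<in>{1..m}. P i \<le> eta i"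
    and lam_bound: "vnorm m lam \<le> B"
    and "0 \<le> r"
  shows "(\<Sum>i=1..m. lam i * \<bar>P i - eta i\<bar>)
           \<le> B * vnorm m (\<lambda>i. eta i - e i) + B * vnorm m L * r"
proof -
  have "lam i * \<bar>P i - eta i\<bar> \<le> lam i * (eta i - e i) + r * (lam i * L i)"
    if i: "i \<in> {1..m}" for i
  proof -
    have "lam i * \<bar>P i - eta i\<bar>
        = lam i * (eta i - e i) + lam i * (Q i - P i) - lam i * (Q i - e i)"
      using feas i by (simp add: algebra_simps)
    also have "\<dots> \<le> lam i * (eta i - e i) + lam i * (L i * r)"
    proof -
      have "lam i * (Q i - e i) = 0"
        using compl i by blast
      moreover have "lam i * (Q i - P i) \<le> lam i * (L i * r)"
        using gap lam_nonneg i by (simp add: mult_left_mono)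
      ultimately show ?thesis by linarith
    qed
    finally show ?thesis by (simp add: mult_ac)
  qed
  then have "(\<Sum>i=1..m. lam i * \<bar>P i - eta i\<bar>)
      \<le> (\<Sum>i=1..m. lam i * (eta i - e i)) + r * (\<Sum>i=1..m. lam i * L i)"
    by (auto simp: sum_distrib_left simp flip: sum.distrib intro: sum_mono)
  also have "\<dots> \<le> B * vnorm m (\<lambda>i. eta i - e i) + r * (B * vnorm m L)"
    using sum_mult_le_vnorm_bound[OF lam_bound] \<open>0 \<le> r\<close> by (intro add_mono mult_left_mono) auto
  finally show ?thesis by (simp add: algebra_simps)
qed

section \<open>Weighted sums and the random index\<close>

lemma sum_le_telescope:
  fixes \<phi> d :: "nat \<Rightarrow> real"
  assumes "\<And>k. \<phi> (Suc k) + d k \<le> \<phi> k"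
  shows "(\<Sum>k\<le>n. d k) \<le> \<phi> 0 - \<phi> (Suc n)"
proof -
  have "(\<Sum>k\<le>n. d k) \<le> (\<Sum>k<Suc n. \<phi> k - \<phi> (Suc k))"
    unfolding lessThan_Suc_atMost using assms by (intro sum_mono) (simp add: algebra_simps)
  also have "\<dots> = \<phi> 0 - \<phi> (Suc n)"
    by (rule sum_lessThan_telescope')
  finally show ?thesis .
qed

lemma sum_weighted_le_last_weight:
  fixes a N :: "nat \<Rightarrow> real"
  assumes "\<forall>j k. j \<le> k \<longrightarrow> k \<le> K \<longrightarrow> a j \<le> a k" "\<forall>k. 0 \<le> N k"
  shows "(\<Sum>k\<le>K. a k * N k) \<le> a K * (\<Sum>k\<le>K. N k)"
proof -
  have "(\<Sum>k\<le>K. a k * N k) \<le> (\<Sum>k\<le>K. a K * N k)"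
    using assms by (intro sum_mono mult_right_mono) auto
  then show ?thesis by (simp add: sum_distrib_left)
qed

definition weighted_pmf :: "(nat \<Rightarrow> real) \<Rightarrow> nat \<Rightarrow> nat pmf" where
  "weighted_pmf a K = embed_pmf (\<lambda>k. if k \<le> K then a k / (\<Sum>j\<le>K. a j) else 0)"

context
  fixes a :: "nat \<Rightarrow> real" and K :: nat
  assumes pos: "\<forall>k\<le>K. 0 < a k"
begin

lemma pmf_weighted_pmf:
  "pmf (weighted_pmf a K) k = (if k \<le> K then a k / (\<Sum>j\<le>K. a j) else 0)"
proof -
  define p where "p k = (if k \<le> K then a k / (\<Sum>j\<le>K. a j) else 0)" for k
  have A: "0 < (\<Sum>j\<le>K. a j)"
    using pos by (intro sum_pos) auto
  then have p_nonneg: "0 \<le> p k" for k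
    unfolding p_def using pos by (simp add: less_imp_le)
  have "(\<integral>\<^sup>+k. ennreal (p k) \<partial>count_space UNIV) = (\<Sum>k\<le>K. ennreal (p k))"
    by (rule nn_integral_count_space') (auto simp: p_def)
  also have "\<dots> = ennreal (\<Sum>k\<le>K. p k)"
    using p_nonneg by (simp add: sum_ennreal)
  also have "\<dots> = ennreal (\<Sum>k\<le>K. a k / (\<Sum>j\<le>K. a j))"
    unfolding p_def by simp
  also have "\<dots> = 1"
    using A by (simp flip: sum_divide_distrib)
  finally have "pmf (embed_pmf p) k = p k"
    by (rule pmf_embed_pmf[OF p_nonneg])
  then show ?thesis
    unfolding weighted_pmf_def p_def .
qed

lemma expectation_weighted_pmf:
  "measure_pmf.expectation (weighted_pmf a K) h = (\<Sum>k\<le>K. a k * h k) / (\<Sum>j\<le>K. a j)"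
proof -
  have "measure_pmf.expectation (weighted_pmf a K) h
      = (\<Sum>k\<le>K. h k * pmf (weighted_pmf a K) k)"
    by (rule integral_measure_pmf_real) (auto simp: set_pmf_eq pmf_weighted_pmf split: if_splits)
  also have "\<dots> = (\<Sum>k\<le>K. a k * h k) / (\<Sum>j\<le>K. a j)"
    by (simp add: pmf_weighted_pmf sum_divide_distrib mult.commute)
  finally show ?thesis .
qed

end

lemma rand_typeI_KKT_weighted_pmf:
  assumes pos: "\<forall>k\<le>K. 0 < a k"
    and feasible: "\<forall>k\<le>K. y k \<in> feas C m f chi eta \<and> (\<forall>i\<in>{1..m}. 0 \<le> l k i)"
    and stat: "(\<Sum>k\<le>K. a k * (setnorm (lagr_subdiff C m grad chi (l k) (y k)))\<^sup>2) \<le> S1"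
    and compl: "(\<Sum>k\<le>K. a k * (\<Sum>i=1..m. l k i * \<bar>psi f chi i (y k) - eta i\<bar>)) \<le> S2"
  shows "rand_typeI_KKT C m f grad chi eta (map_pmf (\<lambda>k. (y k, l k)) (weighted_pmf a K))
           (max S1 S2 / (\<Sum>k\<le>K. a k))"
proof -
  have A: "0 < (\<Sum>k\<le>K. a k)"
    using pos by (intro sum_pos) auto
  have support: "set_pmf (weighted_pmf a K) \<subseteq> {..K}"
    by (auto simp: set_pmf_eq pmf_weighted_pmf[OF pos] split: if_splits)
  have expectation:
    "measure_pmf.expectation (map_pmf (\<lambda>k. (y k, l k)) (weighted_pmf a K)) (case_prod h)
       = (\<Sum>k\<le>K. a k * h (y k) (l k)) / (\<Sum>k\<le>K. a k)" for h :: "_ \<Rightarrow> _ \<Rightarrow> real"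
    by (simp add: expectation_weighted_pmf[OF pos])
  have "- (\<Sum>i=1..m. l k i * (psi f chi i (y k) - eta i))
      = (\<Sum>i=1..m. l k i * \<bar>psi f chi i (y k) - eta i\<bar>)" if "k \<le> K" for k
  proof -
    have "\<forall>i\<in>{1..m}. psi f chi i (y k) \<le> eta i"
      using feasible that unfolding feas_def by blast
    then show ?thesis
      by (simp add: sum_negf[symmetric] algebra_simps abs_of_nonpos)
  qed
  then have "(\<Sum>k\<le>K. a k * - (\<Sum>i=1..m. l k i * (psi f chi i (y k) - eta i))) \<le> S2"
    using compl by simp
  with stat A support feasible show ?thesis
    unfolding rand_typeI_KKT_def expectation by (auto intro: divide_right_mono)
qed

section \<open>Iterates of LCPG\<close>

locale lcpg_iterates =
  fixes C :: "'a::real_inner set" and m :: nat and f chi :: "nat \<Rightarrow> 'a \<Rightarrow> real"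
    and grad :: "nat \<Rightarrow> 'a \<Rightarrow> 'a" and L eta :: "nat \<Rightarrow> real" and x :: "nat \<Rightarrow> 'a"
    and etak lam :: "nat \<Rightarrow> nat \<Rightarrow> real" and B :: real
  assumes convex_dom: "convex C"
    and gradient: "\<And>i y. i \<in> {0..m} \<Longrightarrow> y \<in> C \<Longrightarrow> GDERIV (f i) y :> grad i y"
    and gradient_lipschitz: "\<And>i y z. i \<in> {0..m} \<Longrightarrow> y \<in> C \<Longrightarrow> z \<in> C \<Longrightarrow>
                               norm (grad i y - grad i z) \<le> L i * norm (y - z)"
    and start_dom: "x 0 \<in> C"
    and start_level: "\<And>i. i \<in> {1..m} \<Longrightarrow> psi f chi i (x 0) \<le> etak 0 i"
    and level_mono: "\<And>k i. i \<in> {1..m} \<Longrightarrow> etak k i \<le> etak (Suc k) i"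
    and level_le: "\<And>k i. i \<in> {1..m} \<Longrightarrow> etak k i \<le> eta i"
    and iterate_dom: "\<And>k. x (Suc k) \<in> C"
    and iterate_subproblem_feasible:
      "\<And>k i. i \<in> {1..m} \<Longrightarrow> psik f grad L chi (x k) i (x (Suc k)) \<le> etak k i"
    and multiplier_nonneg: "\<And>k i. i \<in> {1..m} \<Longrightarrow> 0 \<le> lam (Suc k) i"
    and multiplier_stationary:
      "\<And>k. 0 \<in> lagr_subdiff C m (psik_grad grad L (x k)) chi (lam (Suc k)) (x (Suc k))"
    and multiplier_complementary: "\<And>k i. i \<in> {1..m} \<Longrightarrow>
      lam (Suc k) i * (psik f grad L chi (x k) i (x (Suc k)) - etak k i) = 0"
    and multiplier_bound: "\<And>k. vnorm m (lam (Suc k)) \<le> B"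
begin

lemma iterate_in_dom: "x k \<in> C"
  by (cases k) (simp_all add: start_dom iterate_dom)

lemma psi_le_psik_iterate:
  "i \<in> {0..m} \<Longrightarrow> psi f chi i (x (Suc k)) \<le> psik f grad L chi (x k) i (x (Suc k))"
  by (rule psi_le_psik[where C = C])
    (use convex_dom gradient gradient_lipschitz iterate_in_dom in auto)

lemma psik_le_psi_add_iterate:
  "i \<in> {0..m} \<Longrightarrow>
     psik f grad L chi (x k) i (x (Suc k))
       \<le> psi f chi i (x (Suc k)) + L i * (norm (x (Suc k) - x k))\<^sup>2"
  by (rule psik_le_psi_add[where C = C])
    (use convex_dom gradient gradient_lipschitz iterate_in_dom in auto)

lemma psi_iterate_le_level: "i \<in> {1..m} \<Longrightarrow> psi f chi i (x (Suc k)) \<le> etak k i"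
  using psi_le_psik_iterate[of i k] iterate_subproblem_feasible[of i k] by auto

lemma iterate_feasible: "x (Suc k) \<in> feas C m f chi eta"
  unfolding feas_def using iterate_dom psi_iterate_le_level level_le by (blast intro: order_trans)

lemma center_subproblem_feasible: "i \<in> {1..m} \<Longrightarrow> psik f grad L chi (x k) i (x k) \<le> etak k i"
proof (cases k)
  case (Suc j)
  assume "i \<in> {1..m}"
  then show ?thesis
    using psi_iterate_le_level[of i j] level_mono[of i j] Suc by simp
qed (simp add: start_level)

lemma objective_descent:
  "psi f chi 0 (x (Suc k)) + L 0 / 2 * (norm (x (Suc k) - x k))\<^sup>2 \<le> psi f chi 0 (x k)"
proof -
  have "0 \<le> L i * norm (x k - x (Suc k))" if "i \<in> {1..m}" for i
    using gradient_lipschitz[of i "x k" "x (Suc k)"] that iterate_in_dom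
    by (auto intro: order_trans[OF norm_ge_zero])
  then have "psik f grad L chi (x k) 0 (x (Suc k)) + L 0 / 2 * (norm (x k - x (Suc k)))\<^sup>2
      \<le> psik f grad L chi (x k) 0 (x k)"
    using multiplier_stationary multiplier_nonneg multiplier_complementary iterate_in_dom
      center_subproblem_feasible
    by (intro subproblem_kkt_descent[where e = "etak k"] ballI) blast+
  then show ?thesis
    using psi_le_psik_iterate[of 0 k] by (simp add: norm_minus_commute)
qed

lemma sum_step_sq_le:
  "L 0 / 2 * (\<Sum>k\<le>n. (norm (x (Suc k) - x k))\<^sup>2) \<le> psi f chi 0 (x 0) - psi f chi 0 (x (Suc n))"
  unfolding sum_distrib_left using objective_descent by (rule sum_le_telescope)

lemma stationarity_residual_le:
  "(setnorm (lagr_subdiff C m grad chi (lam (Suc k)) (x (Suc k))))\<^sup>2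
     \<le> 4 * (L 0 + B * vnorm m L)\<^sup>2 * (norm (x (Suc k) - x k))\<^sup>2"
proof -
  have "(setnorm (lagr_subdiff C m grad chi (lam (Suc k)) (x (Suc k))))\<^sup>2
      \<le> (2 * (L 0 + B * vnorm m L) * norm (x (Suc k) - x k))\<^sup>2"
    using multiplier_stationary multiplier_nonneg multiplier_bound gradient_lipschitz iterate_in_dom
    by (intro setnorm_lagr_subdiff_le) blast+
  then show ?thesis
    unfolding power_mult_distrib by simp
qed

lemma complementarity_residual_iterate_le:
  "(\<Sum>i=1..m. lam (Suc k) i * \<bar>psi f chi i (x (Suc k)) - eta i\<bar>)
     \<le> B * vnorm m (\<lambda>i. eta i - etak k i) + B * vnorm m L * (norm (x (Suc k) - x k))\<^sup>2"
proof (rule complementarity_residual_le[where Q = "\<lambda>i. psik f grad L chi (x k) i (x (Suc k))"])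
  show "\<forall>i\<in>{1..m}. psik f grad L chi (x k) i (x (Suc k)) - psi f chi i (x (Suc k))
      \<le> L i * (norm (x (Suc k) - x k))\<^sup>2"
    using psik_le_psi_add_iterate[of _ k] by (simp add: algebra_simps)
  show "\<forall>i\<in>{1..m}. psi f chi i (x (Suc k)) \<le> eta i"
    using iterate_feasible[of k] unfolding feas_def by blast
qed (use multiplier_nonneg multiplier_complementary multiplier_bound in auto)

lemma B_nonneg: "0 \<le> B"
  using vnorm_nonneg multiplier_bound order_trans by blast

abbreviation D_sq :: real
  where "D_sq \<equiv> (psi f chi 0 (x 0) - Inf (psi f chi 0 ` feas C m f chi eta)) / L 0"

context
  fixes alpha :: "nat \<Rightarrow> real" and K :: nat
  assumes alpha_pos: "\<forall>k\<le>K. 0 < alpha k"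
    and alpha_mono: "\<forall>j k. j \<le> k \<longrightarrow> k \<le> K \<longrightarrow> alpha j \<le> alpha k"
    and L0_pos: "0 < L 0"
    and objective_bdd_below: "bdd_below (psi f chi 0 ` feas C m f chi eta)"
begin

lemma weighted_step_sq_le:
  "(\<Sum>k\<le>K. alpha k * (norm (x (Suc k) - x k))\<^sup>2) \<le> 2 * alpha K * D_sq"
proof -
  have "Inf (psi f chi 0 ` feas C m f chi eta) \<le> psi f chi 0 (x (Suc K))"
    using objective_bdd_below iterate_feasible by (intro cInf_lower) auto
  then have steps: "(\<Sum>k\<le>K. (norm (x (Suc k) - x k))\<^sup>2) \<le> 2 * D_sq"
    using sum_step_sq_le[of K] L0_pos by (simp add: field_simps)
  have "(\<Sum>k\<le>K. alpha k * (norm (x (Suc k) - x k))\<^sup>2)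
      \<le> alpha K * (\<Sum>k\<le>K. (norm (x (Suc k) - x k))\<^sup>2)"
    by (rule sum_weighted_le_last_weight[OF alpha_mono]) simp
  also have "\<dots> \<le> alpha K * (2 * D_sq)"
    using steps alpha_pos by (intro mult_left_mono) auto
  finally show ?thesis
    by (simp only: mult_ac)
qed

lemma weighted_stationarity_le:
  "(\<Sum>k\<le>K. alpha k * (setnorm (lagr_subdiff C m grad chi (lam (Suc k)) (x (Suc k))))\<^sup>2)
     \<le> 8 * (L 0 + B * vnorm m L)\<^sup>2 * D_sq * alpha K"
proof -
  have "(\<Sum>k\<le>K. alpha k * (setnorm (lagr_subdiff C m grad chi (lam (Suc k)) (x (Suc k))))\<^sup>2)
      \<le> (\<Sum>k\<le>K. alpha k * (4 * (L 0 + B * vnorm m L)\<^sup>2 * (norm (x (Suc k) - x k))\<^sup>2))"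
    using alpha_pos stationarity_residual_le by (intro sum_mono mult_left_mono) auto
  also have "\<dots> = 4 * (L 0 + B * vnorm m L)\<^sup>2 * (\<Sum>k\<le>K. alpha k * (norm (x (Suc k) - x k))\<^sup>2)"
    by (simp add: sum_distrib_left mult_ac)
  also have "\<dots> \<le> 4 * (L 0 + B * vnorm m L)\<^sup>2 * (2 * alpha K * D_sq)"
    by (rule mult_left_mono[OF weighted_step_sq_le]) simp
  finally show ?thesis
    by (simp add: algebra_simps)
qed

lemma weighted_complementarity_le:
  "(\<Sum>k\<le>K. alpha k * (\<Sum>i=1..m. lam (Suc k) i * \<bar>psi f chi i (x (Suc k)) - eta i\<bar>))
     \<le> 2 * B * vnorm m L * D_sq * alpha K + B * (\<Sum>k\<le>K. alpha k * vnorm m (\<lambda>i. eta i - etak k i))"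
proof -
  have "(\<Sum>k\<le>K. alpha k * (\<Sum>i=1..m. lam (Suc k) i * \<bar>psi f chi i (x (Suc k)) - eta i\<bar>))
      \<le> (\<Sum>k\<le>K. alpha k * (B * vnorm m (\<lambda>i. eta i - etak k i)
                            + B * vnorm m L * (norm (x (Suc k) - x k))\<^sup>2))"
    using alpha_pos complementarity_residual_iterate_le by (intro sum_mono mult_left_mono) auto
  also have "\<dots> = B * (\<Sum>k\<le>K. alpha k * vnorm m (\<lambda>i. eta i - etak k i))
      + B * vnorm m L * (\<Sum>k\<le>K. alpha k * (norm (x (Suc k) - x k))\<^sup>2)"
    by (simp add: sum_distrib_left sum.distrib algebra_simps)
  also have "\<dots> \<le> B * (\<Sum>k\<le>K. alpha k * vnorm m (\<lambda>i. eta i - etak k i))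
      + B * vnorm m L * (2 * alpha K * D_sq)"
    using B_nonneg vnorm_nonneg by (intro add_left_mono mult_left_mono[OF weighted_step_sq_le]) simp
  finally show ?thesis
    by (simp add: algebra_simps)
qed

end

lemma D_sq_nonneg:
  assumes "0 < L 0" and "bdd_below (psi f chi 0 ` feas C m f chi eta)"
  shows "0 \<le> D_sq"
proof -
  have "Inf (psi f chi 0 ` feas C m f chi eta) \<le> psi f chi 0 (x 1)"
    using assms(2) iterate_feasible[of 0] by (intro cInf_lower) auto
  moreover have "0 \<le> L 0 / 2 * (norm (x 1 - x 0))\<^sup>2"
    using assms(1) by simp
  then have "psi f chi 0 (x 1) \<le> psi f chi 0 (x 0)"
    using objective_descent[of 0] by simp
  ultimately show ?thesis
    using assms(1) by simp
qed

end

theorem mainTheorem7: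
  fixes C :: "'a::euclidean_space set"
    and m :: nat
    and f chi :: "nat \<Rightarrow> 'a \<Rightarrow> real"
    and grad :: "nat \<Rightarrow> 'a \<Rightarrow> 'a"
    and L :: "nat \<Rightarrow> real"
    and eta :: "nat \<Rightarrow> real"
    and x :: "nat \<Rightarrow> 'a"
    and etak :: "nat \<Rightarrow> nat \<Rightarrow> real"
    and lam :: "nat \<Rightarrow> nat \<Rightarrow> real"
    and B :: real
    and alpha :: "nat \<Rightarrow> real"
    and K :: nat
  assumes dom_ne: "C \<noteq> {}"
    and chi0_convex: "convex C" "convex_on C (chi 0)"
    and chi0_lsc: "closed {(y, t). y \<in> C \<and> chi 0 y \<le> t}"
    and chi_convex: "\<forall>i\<in>{1..m}. convex_on C (chi i)"
    and chi_cont: "\<forall>i\<in>{1..m}. continuous_on C (chi i)"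
    and f_grad: "\<forall>i\<in>{0..m}. \<forall>y\<in>C. GDERIV (f i) y :> grad i y"
    and grad_lip: "\<forall>i\<in>{0..m}. \<forall>y\<in>C. \<forall>z\<in>C. norm (grad i y - grad i z) \<le> L i * norm (y - z)"
    and L0_pos: "L 0 > 0"
    and opt_finite: "bdd_below (psi f chi 0 ` feas C m f chi eta)"
    and feas_ne: "feas C m f chi eta \<noteq> {}"
    and feas_compact: "compact (feas C m f chi eta)"
    and x0: "x 0 \<in> C"
    and eta0: "\<forall>i\<in>{1..m}. psi f chi i (x 0) < etak 0 i \<and> etak 0 i < eta i"
    and eta_step: "\<forall>k. \<forall>i\<in>{1..m}. etak k i < etak (Suc k) i \<and> etak (Suc k) i < eta i"
    and eta_lim: "\<forall>i\<in>{1..m}. (\<lambda>k. etak k i) \<longlonglongrightarrow> eta i"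
    and x_feas: "\<forall>k. x (Suc k) \<in> C \<and>
                   (\<forall>i\<in>{1..m}. psik f grad L chi (x k) i (x (Suc k)) \<le> etak k i)"
    and x_min: "\<forall>k. \<forall>y\<in>C. (\<forall>i\<in>{1..m}. psik f grad L chi (x k) i y \<le> etak k i) \<longrightarrow>
                   psik f grad L chi (x k) 0 (x (Suc k)) \<le> psik f grad L chi (x k) 0 y"
    and lam_nonneg: "\<forall>k. \<forall>i\<in>{1..m}. 0 \<le> lam (Suc k) i"
    and lam_stat: "\<forall>k. 0 \<in> lagr_subdiff C m (\<lambda>i y. grad i (x k) + L i *\<^sub>R (y - x k)) chi
                          (lam (Suc k)) (x (Suc k))"
    and lam_compl: "\<forall>k. \<forall>i\<in>{1..m}.
                      lam (Suc k) i * (psik f grad L chi (x k) i (x (Suc k)) - etak k i) = 0"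
    and mfcq: "\<forall>y\<in>feas C m f chi eta. MFCQ C m f grad chi eta y"
    and B_pos: "B > 0"
    and lam_bound: "\<forall>k. vnorm m (lam (Suc k)) \<le> B"
    and alpha_pos: "\<forall>k\<le>K. 0 < alpha k"
    and alpha_mono: "\<forall>j k. j \<le> k \<longrightarrow> k \<le> K \<longrightarrow> alpha j \<le> alpha k"
  shows "let D = sqrt ((psi f chi 0 (x 0) - Inf (psi f chi 0 ` feas C m f chi eta)) / L 0);
             S1 = 8 * (L 0 + B * vnorm m L)^2 * D^2 * alpha K;
             S2 = 2 * B * vnorm m L * D^2 * alpha K
                  + B * (\<Sum>k\<le>K. alpha k * vnorm m (\<lambda>i. eta i - etak k i));
             A = (\<Sum>j\<le>K. alpha j);
             khat = embed_pmf (\<lambda>k. if k \<le> K then alpha k / A else 0)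
         in (\<Sum>k\<le>K. alpha k * (setnorm (lagr_subdiff C m grad chi (lam (Suc k)) (x (Suc k))))^2) \<le> S1
          \<and> (\<Sum>k\<le>K. alpha k * (\<Sum>i=1..m. lam (Suc k) i * \<bar>psi f chi i (x (Suc k)) - eta i\<bar>)) \<le> S2
          \<and> rand_typeI_KKT C m f grad chi eta
              (map_pmf (\<lambda>k. (x (Suc k), lam (Suc k))) khat) (max S1 S2 / A)"
proof -
  have level_le: "etak k i \<le> eta i" if "i \<in> {1..m}" for k i
    using eta0 eta_step that by (cases k) (auto intro: less_imp_le)
  interpret lcpg_iterates C m f chi grad L eta x etak lam B
    using chi0_convex(1) f_grad grad_lip x0 eta0 eta_step level_le x_feas lam_nonneg lam_stat
      lam_compl lam_bound
    by unfold_locales (auto intro: less_imp_le)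
  have D: "(sqrt D_sq)\<^sup>2 = D_sq"
    using D_sq_nonneg[OF L0_pos opt_finite] by simp
  note stat = weighted_stationarity_le[OF alpha_pos alpha_mono L0_pos opt_finite]
  note compl = weighted_complementarity_le[OF alpha_pos alpha_mono L0_pos opt_finite]
  show ?thesis
    unfolding Let_def D weighted_pmf_def[symmetric]
    using stat compl rand_typeI_KKT_weighted_pmf[OF alpha_pos _ stat compl]
      iterate_feasible lam_nonneg by auto
qed

end
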